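(* Let $\mathcal{G}=(\mathcal{V},\mathcal{E},\mathbf{X})\sim \mathrm{CSBM}(n,p,q,\mathbb{P}_1,\mathbb{P}_{-1})$ with $p,q\in(0,1)$, where $\mathbb{P}_{1},\mathbb{P}_{-1}$ have densities (also denoted $\mathbb{P}_{1},\mathbb{P}_{-1}$). Fix a node $v$ with neighbor set $\mathcal{N}_v$. Consider the MAP estimator of $Y_v$ given $X_v$, $\{X_u\}_{u\in\mathcal{N}_v}$ and $\mathcal{N}_v$, $$f^*(X_v,\{X_u\}_{u\in\mathcal{N}_v})=\arg\max_{Y_v\in\{-1,1\}}\max_{Y_u\in\{-1,1\},\,\forall u\in\mathcal{N}_v}\pi_{Y_v,\{Y_u\}_{u\in\mathcal{N}_v}}\,\mathbb{P}\big(X_v,\{X_u\}_{u\in\mathcal{N}_v},\mathcal{N}_v\,\big|\,Y_v,\{Y_u\}_{u\in\mathcal{N}_v}\big),$$ where $\pi$ denotes the prior of the labels. Then the optimal (MAP) classifier is $f^*=\mathrm{sgn}(\mathcal{P}_v)$, where $$\mathcal{P}_v=\psi(X_v;\mathbb{P}_1,\mathbb{P}_{-1})+\sum_{u\in\mathcal{N}_v}\phi\big(\psi(X_u;\mathbb{P}_1,\mathbb{P}_{-1});\log(p/q)\big),$$ with $\psi(a;\mathbb{P}_1,\mathbb{P}_{-1})=\log\frac{\mathbb{P}_1(a)}{\mathbb{P}_{-1}(a)}$ and $\phi(a;b)=\mathrm{ReLU}(a+b)-\mathrm{ReLU}(a-b)-b$.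
   Context: $\mathrm{CSBM}(n,p,q,\mathbb{P}_1,\mathbb{P}_{-1})$ (contextual stochastic block model): there are $n$ nodes $\mathcal{V}=[n]$; each node $v$ independently gets a label $Y_v\in\{-1,1\}$ uniformly at random (Rademacher); given $Y_v$, the attribute $X_v$ is drawn from $\mathbb{P}_{Y_v}$; for two nodes $u,v$, an edge is present with probability $p$ if $Y_u=Y_v$ and with probability $q$ if $Y_u\neq Y_v$; all attributes and edges are mutually independent given the labels $\mathbf{Y}$. $\mathrm{ReLU}(x)=\max\{x,0\}$. *)

theory Defs
  imports Complex_Main "HOL-Library.FuncSet"
begin

definition ReLU :: "real \<Rightarrow> real" where
  "ReLU x = max x 0"

definition psi :: "('a \<Rightarrow> real) \<Rightarrow> ('a \<Rightarrow> real) \<Rightarrow> 'a \<Rightarrow> real" where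
  "psi P1 Pm1 a = ln (P1 a / Pm1 a)"

definition phi :: "real \<Rightarrow> real \<Rightarrow> real" where
  "phi a b = ReLU (a + b) - ReLU (a - b) - b"

definition label_density :: "('a \<Rightarrow> real) \<Rightarrow> ('a \<Rightarrow> real) \<Rightarrow> int \<Rightarrow> 'a \<Rightarrow> real" where
  "label_density P1 Pm1 y a = (if y = 1 then P1 a else Pm1 a)"

definition edge_prob :: "real \<Rightarrow> real \<Rightarrow> int \<Rightarrow> int \<Rightarrow> real" where
  "edge_prob p q a b = (if a = b then p else q)"

text \<open>P(N_v = N | Y_v = yv, Y_u = yN u for u in N): the labels of the remaining nodes
  W = V - N - {v} are not conditioned on and are marginalised out (uniform prior,
  independent edges).\<close>
definition nbhd_prob :: "nat \<Rightarrow> real \<Rightarrow> real \<Rightarrow> nat \<Rightarrow> nat set \<Rightarrow> int \<Rightarrow> (nat \<Rightarrow> int) \<Rightarrow> real" where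
  "nbhd_prob n p q v N yv yN =
     (let W = {..<n} - N - {v} in
      (\<Prod>u\<in>N. edge_prob p q yv (yN u)) *
      (\<Sum>z\<in>W \<rightarrow>\<^sub>E {-1, 1}. (1/2) ^ card W * (\<Prod>w\<in>W. 1 - edge_prob p q yv (z w))))"

definition csbm_likelihood ::
  "nat \<Rightarrow> real \<Rightarrow> real \<Rightarrow> ('a \<Rightarrow> real) \<Rightarrow> ('a \<Rightarrow> real) \<Rightarrow> nat \<Rightarrow> nat set \<Rightarrow> (nat \<Rightarrow> 'a)
     \<Rightarrow> int \<Rightarrow> (nat \<Rightarrow> int) \<Rightarrow> real" where
  "csbm_likelihood n p q P1 Pm1 v N x yv yN =
     label_density P1 Pm1 yv (x v) * (\<Prod>u\<in>N. label_density P1 Pm1 (yN u) (x u))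
     * nbhd_prob n p q v N yv yN"

definition label_prior :: "nat set \<Rightarrow> real" where
  "label_prior N = (1/2) ^ (card N + 1)"

definition map_objective ::
  "nat \<Rightarrow> real \<Rightarrow> real \<Rightarrow> ('a \<Rightarrow> real) \<Rightarrow> ('a \<Rightarrow> real) \<Rightarrow> nat \<Rightarrow> nat set \<Rightarrow> (nat \<Rightarrow> 'a)
     \<Rightarrow> int \<Rightarrow> real" where
  "map_objective n p q P1 Pm1 v N x yv =
     Max ((\<lambda>yN. label_prior N * csbm_likelihood n p q P1 Pm1 v N x yv yN) ` (N \<rightarrow>\<^sub>E {-1, 1}))"

definition map_set ::
  "nat \<Rightarrow> real \<Rightarrow> real \<Rightarrow> ('a \<Rightarrow> real) \<Rightarrow> ('a \<Rightarrow> real) \<Rightarrow> nat \<Rightarrow> nat set \<Rightarrow> (nat \<Rightarrow> 'a) \<Rightarrow> int set" where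
  "map_set n p q P1 Pm1 v N x =
     {y \<in> {-1, 1}. \<forall>y'\<in>{-1, 1}. map_objective n p q P1 Pm1 v N x y' \<le> map_objective n p q P1 Pm1 v N x y}"

definition P_stat ::
  "real \<Rightarrow> real \<Rightarrow> ('a \<Rightarrow> real) \<Rightarrow> ('a \<Rightarrow> real) \<Rightarrow> nat \<Rightarrow> nat set \<Rightarrow> (nat \<Rightarrow> 'a) \<Rightarrow> real" where
  "P_stat p q P1 Pm1 v N x =
     psi P1 Pm1 (x v) + (\<Sum>u\<in>N. phi (psi P1 Pm1 (x u)) (ln (p / q)))"

end

theory Submission
  imports Defs
begin

text \<open>The labels of the non-neighbours of v are summed out, and each contributes the factor
  ((1 - p) + (1 - q)) / 2 whatever Y_v is. Up to that common constant, the MAP objective for Y_v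
  is P_{Y_v}(X_v) times a product over the neighbours u, so the maximum over the neighbour labels
  is taken factor by factor. On a log scale, neighbour u contributes
  ln max(P_1 p, P_{-1} q) - ln max(P_1 q, P_{-1} p) = \<phi>(\<psi>(X_u), ln(p/q))
  to the comparison of Y_v = 1 with Y_v = -1.\<close>

lemma Max_prod_PiE:
  fixes g :: "'a \<Rightarrow> 'b \<Rightarrow> 'c::linordered_semidom"
  assumes "finite I" "finite Y" "Y \<noteq> {}"
    and nonneg: "\<And>i y. i \<in> I \<Longrightarrow> y \<in> Y \<Longrightarrow> 0 \<le> g i y"
  shows "Max ((\<lambda>f. \<Prod>i\<in>I. g i (f i)) ` (I \<rightarrow>\<^sub>E Y)) = (\<Prod>i\<in>I. Max (g i ` Y))"
proof (rule Max_eqI)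
  show "finite ((\<lambda>f. \<Prod>i\<in>I. g i (f i)) ` (I \<rightarrow>\<^sub>E Y))"
    using assms by (simp add: finite_PiE)
next
  fix m assume "m \<in> (\<lambda>f. \<Prod>i\<in>I. g i (f i)) ` (I \<rightarrow>\<^sub>E Y)"
  then obtain f where f: "f \<in> I \<rightarrow>\<^sub>E Y" and m: "m = (\<Prod>i\<in>I. g i (f i))"
    by (rule imageE)
  show "m \<le> (\<Prod>i\<in>I. Max (g i ` Y))"
    unfolding m
  proof (rule prod_mono)
    fix i assume i: "i \<in> I"
    have "f i \<in> Y"
      using f i by (rule PiE_mem)
    then show "0 \<le> g i (f i) \<and> g i (f i) \<le> Max (g i ` Y)"
      using assms(2) nonneg[OF i] by simp
  qed
next
  define h where "h i = (SOME y. y \<in> Y \<and> g i y = Max (g i ` Y))" for i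
  have h: "h i \<in> Y \<and> g i (h i) = Max (g i ` Y)" for i
  proof -
    have "Max (g i ` Y) \<in> g i ` Y"
      using assms(2,3) by (intro Max_in) simp_all
    then have "\<exists>y. y \<in> Y \<and> g i y = Max (g i ` Y)"
      by (auto simp: image_iff)
    then show ?thesis
      unfolding h_def by (rule someI_ex)
  qed
  have "(\<Prod>i\<in>I. Max (g i ` Y)) = (\<Prod>i\<in>I. g i (restrict h I i))"
    using h by simp
  moreover have "restrict h I \<in> I \<rightarrow>\<^sub>E Y"
    using h by simp
  ultimately show "(\<Prod>i\<in>I. Max (g i ` Y)) \<in> (\<lambda>f. \<Prod>i\<in>I. g i (f i)) ` (I \<rightarrow>\<^sub>E Y)"
    by (rule image_eqI)
qed

lemma ln_max: "0 < (a::real) \<Longrightarrow> 0 < b \<Longrightarrow> ln (max a b) = max (ln a) (ln b)"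
  by (simp add: max_def)

lemma ln_max_ratio_eq_phi:
  assumes "0 < a" "0 < b" "0 < p" "0 < q"
  shows "ln (max (a * p) (b * q)) - ln (max (a * q) (b * p)) = phi (ln (a / b)) (ln (p / q))"
  using assms by (simp add: ln_max ln_mult ln_div phi_def ReLU_def)

lemma nbhd_prob_eq:
  assumes "yv \<in> {-1, 1}"
  shows "nbhd_prob n p q v N yv yN
       = (\<Prod>u\<in>N. edge_prob p q yv (yN u)) * ((2 - p - q) / 2) ^ card ({..<n} - N - {v})"
proof -
  define W where "W = {..<n} - N - {v}"
  have label_sum: "(\<Sum>y\<in>{-1, 1::int}. 1 - edge_prob p q yv y) = 2 - p - q"
    using assms by (auto simp: edge_prob_def)
  have "(\<Sum>z\<in>W \<rightarrow>\<^sub>E {-1, 1}. (1/2) ^ card W * (\<Prod>w\<in>W. 1 - edge_prob p q yv (z w)))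
      = (1/2) ^ card W * (\<Sum>z\<in>W \<rightarrow>\<^sub>E {-1, 1::int}. \<Prod>w\<in>W. 1 - edge_prob p q yv (z w))"
    by (simp add: sum_distrib_left)
  also have "\<dots> = (1/2) ^ card W * (\<Prod>w\<in>W. \<Sum>y\<in>{-1, 1::int}. 1 - edge_prob p q yv y)"
    by (subst prod_sum_PiE) (simp_all add: W_def)
  also have "\<dots> = ((2 - p - q) / 2) ^ card W"
    by (simp add: label_sum power_divide)
  finally show ?thesis
    by (simp add: nbhd_prob_def W_def)
qed

definition neighbour_weight :: "real \<Rightarrow> real \<Rightarrow> ('a \<Rightarrow> real) \<Rightarrow> ('a \<Rightarrow> real) \<Rightarrow> int \<Rightarrow> 'a \<Rightarrow> int \<Rightarrow> real"
  where "neighbour_weight p q P1 Pm1 yv a y = label_density P1 Pm1 y a * edge_prob p q yv y"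

text \<open>The likelihood of \<open>Y\<^sub>v = yv\<close> with the neighbour labels profiled out (maximised over), up to
  the factor \<open>label_prior N * ((2 - p - q) / 2) ^ card W\<close> common to both labels.\<close>
definition profile_likelihood ::
  "real \<Rightarrow> real \<Rightarrow> ('a \<Rightarrow> real) \<Rightarrow> ('a \<Rightarrow> real) \<Rightarrow> nat \<Rightarrow> nat set \<Rightarrow> (nat \<Rightarrow> 'a) \<Rightarrow> int \<Rightarrow> real"
  where "profile_likelihood p q P1 Pm1 v N x yv =
    label_density P1 Pm1 yv (x v)
    * (\<Prod>u\<in>N. max (neighbour_weight p q P1 Pm1 yv (x u) (-1)) (neighbour_weight p q P1 Pm1 yv (x u) 1))"

locale csbm_node =
  fixes n :: nat and p q :: real and P1 Pm1 :: "'a \<Rightarrow> real"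
    and v :: nat and N :: "nat set" and x :: "nat \<Rightarrow> 'a"
  assumes p: "0 < p" "p < 1" and q: "0 < q" "q < 1"
    and N: "N \<subseteq> {..<n} - {v}"
    and P1_pos: "\<And>u. u \<in> insert v N \<Longrightarrow> P1 (x u) > 0"
    and Pm1_pos: "\<And>u. u \<in> insert v N \<Longrightarrow> Pm1 (x u) > 0"
begin

lemma finite_nbhd: "finite N"
  using N finite_subset by blast

lemma label_density_pos: "u \<in> insert v N \<Longrightarrow> label_density P1 Pm1 y (x u) > 0"
  using P1_pos Pm1_pos by (simp add: label_density_def)

lemma neighbour_weight_pos: "u \<in> N \<Longrightarrow> neighbour_weight p q P1 Pm1 yv (x u) y > 0"
  using label_density_pos p q by (simp add: neighbour_weight_def edge_prob_def)

lemma profile_likelihood_pos: "profile_likelihood p q P1 Pm1 v N x yv > 0"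
  using label_density_pos neighbour_weight_pos
  by (auto simp: profile_likelihood_def less_max_iff_disj intro!: mult_pos_pos prod_pos)

lemma map_objective_eq:
  assumes yv: "yv \<in> {-1, 1}"
  shows "map_objective n p q P1 Pm1 v N x yv
       = label_prior N * ((2 - p - q) / 2) ^ card ({..<n} - N - {v})
         * profile_likelihood p q P1 Pm1 v N x yv"
proof -
  define c where "c = label_prior N * ((2 - p - q) / 2) ^ card ({..<n} - N - {v})
    * label_density P1 Pm1 yv (x v)"
  define g where "g = (\<lambda>u. neighbour_weight p q P1 Pm1 yv (x u))"
  have "c \<ge> 0"
    using p q label_density_pos by (simp add: c_def label_prior_def less_imp_le)
  then have mono_c: "mono ((*) c)"
    by (simp add: mono_def mult_left_mono)
  have likelihood_eq: "(\<lambda>yN. label_prior N * csbm_likelihood n p q P1 Pm1 v N x yv yN)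
      = (*) c \<circ> (\<lambda>yN. \<Prod>u\<in>N. g u (yN u))"
    using yv by (auto simp: csbm_likelihood_def nbhd_prob_eq c_def g_def neighbour_weight_def
        prod.distrib mult_ac)
  have "map_objective n p q P1 Pm1 v N x yv
      = Max ((*) c ` (\<lambda>yN. \<Prod>u\<in>N. g u (yN u)) ` (N \<rightarrow>\<^sub>E {-1, 1}))"
    unfolding map_objective_def likelihood_eq image_comp ..
  also have "\<dots> = c * Max ((\<lambda>yN. \<Prod>u\<in>N. g u (yN u)) ` (N \<rightarrow>\<^sub>E {-1, 1}))"
    using finite_nbhd
    by (intro mono_Max_commute[OF mono_c, symmetric]) (simp_all add: finite_PiE PiE_eq_empty_iff)
  also have "\<dots> = c * (\<Prod>u\<in>N. Max (g u ` {-1, 1}))"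
    using finite_nbhd neighbour_weight_pos
    by (subst Max_prod_PiE) (auto simp: g_def less_imp_le)
  finally show ?thesis
    by (simp add: profile_likelihood_def c_def g_def)
qed

lemma ln_profile_likelihood_ratio:
  "ln (profile_likelihood p q P1 Pm1 v N x 1) - ln (profile_likelihood p q P1 Pm1 v N x (-1))
     = P_stat p q P1 Pm1 v N x"
proof -
  let ?m = "\<lambda>yv u. max (neighbour_weight p q P1 Pm1 yv (x u) (-1)) (neighbour_weight p q P1 Pm1 yv (x u) 1)"
  have ln_profile: "ln (profile_likelihood p q P1 Pm1 v N x yv)
      = ln (label_density P1 Pm1 yv (x v)) + (\<Sum>u\<in>N. ln (?m yv u))" for yv
  proof -
    have "\<And>u. u \<in> N \<Longrightarrow> ?m yv u > 0"
      using neighbour_weight_pos by (simp add: less_max_iff_disj)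
    then show ?thesis
      using label_density_pos[of v yv] finite_nbhd
      by (simp add: profile_likelihood_def ln_mult prod_pos ln_prod less_imp_neq[symmetric])
  qed
  have neighbour: "ln (?m 1 u) - ln (?m (-1) u) = phi (psi P1 Pm1 (x u)) (ln (p / q))"
    if "u \<in> N" for u
    using ln_max_ratio_eq_phi[of "P1 (x u)" "Pm1 (x u)" p q] that P1_pos Pm1_pos p q
    by (simp add: neighbour_weight_def label_density_def edge_prob_def psi_def max.commute)
  have centre: "ln (P1 (x v)) - ln (Pm1 (x v)) = psi P1 Pm1 (x v)"
    using P1_pos[of v] Pm1_pos[of v] by (simp add: psi_def ln_div)
  have "ln (profile_likelihood p q P1 Pm1 v N x 1) - ln (profile_likelihood p q P1 Pm1 v N x (-1))
      = (ln (P1 (x v)) - ln (Pm1 (x v))) + (\<Sum>u\<in>N. ln (?m 1 u) - ln (?m (-1) u))"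
    by (simp add: ln_profile label_density_def sum_subtractf)
  also have "\<dots> = P_stat p q P1 Pm1 v N x"
    unfolding P_stat_def centre using neighbour by (simp cong: sum.cong)
  finally show ?thesis .
qed

lemma map_set_eq:
  "map_set n p q P1 Pm1 v N x
     = {y \<in> {-1, 1}. \<forall>y'\<in>{-1, 1}.
          profile_likelihood p q P1 Pm1 v N x y' \<le> profile_likelihood p q P1 Pm1 v N x y}"
proof -
  have "label_prior N * ((2 - p - q) / 2) ^ card ({..<n} - N - {v}) > 0"
    using p q by (simp add: label_prior_def)
  then show ?thesis
    by (auto simp: map_set_def map_objective_eq mult_le_cancel_left_pos)
qed

end

theorem proposition1:
  fixes n :: nat and p q :: real and P1 Pm1 :: "'a \<Rightarrow> real"
    and v :: nat and N :: "nat set" and x :: "nat \<Rightarrow> 'a"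
  assumes "0 < p" "p < 1" "0 < q" "q < 1"
    and "v < n" and "N \<subseteq> {..<n} - {v}"
    and "\<And>u. u \<in> insert v N \<Longrightarrow> P1 (x u) > 0"
    and "\<And>u. u \<in> insert v N \<Longrightarrow> Pm1 (x u) > 0"
  shows "(P_stat p q P1 Pm1 v N x > 0 \<longrightarrow> map_set n p q P1 Pm1 v N x = {1})
       \<and> (P_stat p q P1 Pm1 v N x < 0 \<longrightarrow> map_set n p q P1 Pm1 v N x = {-1})
       \<and> (P_stat p q P1 Pm1 v N x = 0 \<longrightarrow> map_set n p q P1 Pm1 v N x = {-1, 1})"
proof -
  interpret csbm_node n p q P1 Pm1 v N x
    using assms by unfold_locales auto
  let ?L = "profile_likelihood p q P1 Pm1 v N x"
  have "?L 1 > 0" "?L (-1) > 0"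
    by (rule profile_likelihood_pos)+
  then have "(P_stat p q P1 Pm1 v N x > 0) = (?L (-1) < ?L 1)"
    "(P_stat p q P1 Pm1 v N x < 0) = (?L 1 < ?L (-1))"
    "(P_stat p q P1 Pm1 v N x = 0) = (?L 1 = ?L (-1))"
    by (simp_all flip: ln_profile_likelihood_ratio)
  then show ?thesis
    unfolding map_set_eq by auto
qed

end
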